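(* Let $\alpha:R\to R'$ be a Jordan homomorphism and let $R''$ be the subring of $R'$ generated by $R^\alpha$. Let $H$ and $H''$ be the centres of $E_2(R)$ and $E_2(R'')$, respectively. Then: (a) for every finite sequence $T$ in $R$, $E(T)\in H$ implies $E(T^\alpha)\in H''$; (b) the set $N_\alpha:=\{E(T^\alpha)\mid T \text{ a finite sequence in } R \text{ with } E(T)=I\}$ is contained in $H''$; (c) $N_\alpha$ is a normal subgroup of $E_2(R'')$, and the mapping $\alpha_E:E_2(R)\to E_2(R'')/N_\alpha$, $E(T)\mapsto N_\alpha\cdot E(T^\alpha)$ (for finite sequences $T$ in $R$) is a well defined homomorphism of groups.
   Context: Rings are associative with $1$, preserved by homomorphisms and inherited by subrings. A Jordan homomorphism $\alpha:R\to R'$ is a map with $(a+b)^\alpha=a^\alpha+b^\alpha$, $1^\alpha=1'$, $(aba)^\alpha=a^\alpha b^\alpha a^\alpha$ for all $a,b\in R$. For $t$ in a ring let $E(t):=\begin{pmatrix} t&1\\-1&0\end{pmatrix}$; for a finite sequence $T=(t_1,\ldots,t_n)$ ($n\geq 0$) let $E(T):=E(t_1)E(t_2)\cdots E(t_n)$ (the identity $I$ if $n=0$), and $T^\alpha:=(t_1^\alpha,\ldots,t_n^\alpha)$. $E_2(R)$ is the subgroup of $GL_2(R)$ generated by all $E(t)$, $t\in R$; every element of $E_2(R)$ has the form $E(T)$. Its centre is $E_2(R)\cap\{\mathrm{diag}(a,a)\mid a \text{ a central unit of } R\}$. *)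

theory Defs
  imports "HOL-Analysis.Analysis" "HOL-Algebra.Algebra"
begin

definition jordan_hom :: "('a::ring_1 \<Rightarrow> 'b::ring_1) \<Rightarrow> bool" where
  "jordan_hom \<alpha> \<longleftrightarrow>
     (\<forall>a b. \<alpha> (a + b) = \<alpha> a + \<alpha> b) \<and> \<alpha> 1 = 1 \<and>
     (\<forall>a b. \<alpha> (a * b * a) = \<alpha> a * \<alpha> b * \<alpha> a)"

definition subring_gen :: "'b::ring_1 set \<Rightarrow> 'b set" where
  "subring_gen S = \<Inter>{A. S \<subseteq> A \<and> 1 \<in> A \<and> 0 \<in> A \<and>
      (\<forall>x\<in>A. \<forall>y\<in>A. x + y \<in> A \<and> x - y \<in> A \<and> x * y \<in> A)}"

definition Emat1 :: "'a::ring_1 \<Rightarrow> 'a^2^2" where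
  "Emat1 t = (\<chi> i j. if i = 1 then (if j = 1 then t else 1)
                     else (if j = 1 then -1 else 0))"

definition Emat :: "'a::ring_1 list \<Rightarrow> 'a^2^2" where
  "Emat T = foldr (\<lambda>t M. Emat1 t ** M) T (mat 1)"

definition M2 :: "'a::ring_1 itself \<Rightarrow> ('a^2^2) monoid" where
  "M2 _ = \<lparr>carrier = UNIV, mult = (**), one = mat 1\<rparr>"

definition GL2 :: "'a::ring_1 itself \<Rightarrow> ('a^2^2) monoid" where
  "GL2 x = units_of (M2 x)"

definition E2 :: "'a::ring_1 set \<Rightarrow> ('a^2^2) set" where
  "E2 S = generate (GL2 TYPE('a)) (Emat1 ` S)"

definition E2grp :: "'a::ring_1 set \<Rightarrow> ('a^2^2) monoid" where
  "E2grp S = (GL2 TYPE('a))\<lparr>carrier := E2 S\<rparr>"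

definition centre :: "('g, 'c) monoid_scheme \<Rightarrow> 'g set" where
  "centre G = {z \<in> carrier G. \<forall>g\<in>carrier G. z \<otimes>\<^bsub>G\<^esub> g = g \<otimes>\<^bsub>G\<^esub> z}"

end

theory Submission
  imports Defs
begin

text \<open>A central element of \<open>E\<^sub>2(R)\<close> is a scalar \<open>a I\<close> with \<open>a\<close> central. For a row of
  \<open>E(T)\<close> and a column of \<open>E(rev T)\<close>, the products \<open>row \<cdot> M \<cdot> column\<close> are built from \<open>M\<close> by
  Jordan triple products, so a Jordan homomorphism commutes with them. Since \<open>E(rev T)\<close> is
  \<open>E(T)\<^sup>-\<^sup>1\<close> up to conjugation by the swap matrix, this forces the upper right entry of
  \<open>E(T\<^sup>\<alpha>)\<close> to vanish whenever \<open>E(T)\<close> is scalar. Applied to the conjugates of a central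
  \<open>E(T)\<close> by \<open>E(0)\<close> and \<open>E(s)\<close>, it shows that \<open>E(T\<^sup>\<alpha>)\<close> is a scalar commuting with
  \<open>R\<^sup>\<alpha>\<close>, hence central in \<open>E\<^sub>2(R'')\<close>. So \<open>N\<^sub>\<alpha>\<close> is central and thus normal, and
  \<open>E(T) = E(S)\<close> puts \<open>E(T\<^sup>\<alpha>) E(S\<^sup>\<alpha>)\<^sup>-\<^sup>1\<close> into \<open>N\<^sub>\<alpha>\<close>, which makes \<open>\<alpha>\<^sub>E\<close> well defined.\<close>

definition mat2 :: "'a::ring_1 \<Rightarrow> 'a \<Rightarrow> 'a \<Rightarrow> 'a \<Rightarrow> 'a^2^2" where
  "mat2 a b c d = (\<chi> i j. if i = 1 then (if j = 1 then a else b) else (if j = 1 then c else d))"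

lemma mat2_nth [simp]:
  "mat2 a b c d $ 1 $ 1 = a" "mat2 a b c d $ 1 $ 2 = b"
  "mat2 a b c d $ 2 $ 1 = c" "mat2 a b c d $ 2 $ 2 = d"
  by (simp_all add: mat2_def)

lemma mat2_eta: "M = mat2 (M$1$1) (M$1$2) (M$2$1) (M$2$2)"
  by (auto simp: mat2_def vec_eq_iff forall_2)

lemma mat2_eq_iff [simp]:
  "mat2 a b c d = mat2 a' b' c' d' \<longleftrightarrow> a = a' \<and> b = b' \<and> c = c' \<and> d = d'"
  by (auto simp: mat2_def vec_eq_iff forall_2)

lemma mat2_mult [simp]:
  "mat2 a b c d ** mat2 a' b' c' d' =
     mat2 (a * a' + b * c') (a * b' + b * d') (c * a' + d * c') (c * b' + d * d')"
  by (simp add: mat2_def vec_eq_iff forall_2 matrix_matrix_mult_def sum_2)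

lemma mat_1_eq_mat2: "mat 1 = mat2 1 0 0 1"
  by (simp add: mat2_def mat_def vec_eq_iff forall_2)

lemma Emat1_eq_mat2: "Emat1 t = mat2 t 1 (-1) 0"
  by (simp add: mat2_def Emat1_def vec_eq_iff forall_2)

lemma Emat_Nil [simp]: "Emat [] = mat 1"
  and Emat_Cons [simp]: "Emat (t # T) = Emat1 t ** Emat T"
  by (simp_all add: Emat_def)

lemma Emat_append: "Emat (T @ S) = Emat T ** Emat S"
  by (induction T) (simp_all add: matrix_mul_assoc)

lemma Emat1_mult_entries:
  "(Emat1 t ** M) $ 1 $ 1 = t * M $ 1 $ 1 + M $ 2 $ 1"
  "(Emat1 t ** M) $ 2 $ 1 = - M $ 1 $ 1"
  and mult_Emat1_entries:
  "(M ** Emat1 t) $ 1 $ 1 = M $ 1 $ 1 * t - M $ 1 $ 2"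
  "(M ** Emat1 t) $ 1 $ 2 = M $ 1 $ 1"
  by (subst mat2_eta[of M], simp add: Emat1_eq_mat2)+

lemma jordan_hom_add: "jordan_hom f \<Longrightarrow> f (a + b) = f a + f b"
  and jordan_hom_one: "jordan_hom f \<Longrightarrow> f 1 = 1"
  and jordan_hom_sandwich: "jordan_hom f \<Longrightarrow> f (a * b * a) = f a * f b * f a"
  by (simp_all add: jordan_hom_def)

lemma jordan_hom_zero: "jordan_hom f \<Longrightarrow> f 0 = 0"
  using jordan_hom_add[of f 0 0] by simp

lemma jordan_hom_uminus: "jordan_hom f \<Longrightarrow> f (- a) = - f a"
  using jordan_hom_add[of f a "- a"] by (simp add: jordan_hom_zero) (metis neg_eq_iff_add_eq_0)

lemma jordan_hom_triple:
  assumes "jordan_hom f"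
  shows "f (a * b * c + c * b * a) = f a * f b * f c + f c * f b * f a"
proof -
  have "f (a * b * a) + f (a * b * c + c * b * a) + f (c * b * c) = f ((a + c) * b * (a + c))"
    by (simp only: jordan_hom_add[OF assms, symmetric]) (simp add: algebra_simps)
  also have "\<dots> = (f a + f c) * f b * (f a + f c)"
    using assms by (simp add: jordan_hom_sandwich jordan_hom_add)
  also have "\<dots> = f a * f b * f a + (f a * f b * f c + f c * f b * f a) + f c * f b * f c"
    by (simp add: algebra_simps)
  finally show ?thesis
    using assms by (simp add: jordan_hom_sandwich)
qed

subsection \<open>Transport of continuant expressions along a Jordan homomorphism\<close>

text \<open>\<open>sandwich_entry T x y w z = a M c\<close>, where \<open>a\<close> is the first row of \<open>E(T)\<close>,
  \<open>M = [[x,y],[w,z]]\<close> and \<open>c\<close> is the first column of \<open>E(rev T)\<close> with its second entry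
  negated. Appending \<open>t\<close> to \<open>T\<close> replaces \<open>M\<close> by \<open>E(t) M E(t)\<^sup>T\<close>, whose entries are
  Jordan triple products in \<open>t\<close> and the entries of \<open>M\<close>; \<open>jordan_compatible\<close> is the
  invariant preserved by this step.\<close>

definition sandwich_entry :: "'a::ring_1 list \<Rightarrow> 'a \<Rightarrow> 'a \<Rightarrow> 'a \<Rightarrow> 'a \<Rightarrow> 'a" where
  "sandwich_entry T x y w z =
     Emat T $ 1 $ 1 * x * Emat (rev T) $ 1 $ 1 - Emat T $ 1 $ 1 * y * Emat (rev T) $ 2 $ 1
   + Emat T $ 1 $ 2 * w * Emat (rev T) $ 1 $ 1 - Emat T $ 1 $ 2 * z * Emat (rev T) $ 2 $ 1"

lemma sandwich_entry_Nil: "sandwich_entry [] x y w z = x"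
  by (simp add: sandwich_entry_def mat_1_eq_mat2)

lemma sandwich_entry_snoc:
  "sandwich_entry (T @ [t]) x y w z =
     sandwich_entry T (t * x * t + t * y + w * t + z) (- (t * x + w)) (- (x * t + y)) x"
  by (simp add: sandwich_entry_def Emat_append matrix_mul_rid Emat1_mult_entries mult_Emat1_entries
      algebra_simps)

definition jordan_compatible ::
    "('a::ring_1 \<Rightarrow> 'b::ring_1) \<Rightarrow> 'a \<Rightarrow> 'a \<Rightarrow> 'a \<Rightarrow> 'a \<Rightarrow> 'b \<Rightarrow> 'b \<Rightarrow> 'b \<Rightarrow> 'b \<Rightarrow> bool" where
  "jordan_compatible f x y w z x' y' w' z' \<longleftrightarrow> f x = x' \<and> f z = z' \<and>
     (\<forall>s. f (s * y + w * s) = f s * y' + w' * f s) \<and> (\<forall>s. f (y * s + s * w) = y' * f s + f s * w')"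

lemma jordan_compatible_step:
  assumes f: "jordan_hom f" and c: "jordan_compatible f x y w z x' y' w' z'"
  shows "jordan_compatible f
     (t * x * t + t * y + w * t + z) (- (t * x + w)) (- (x * t + y)) x
     (f t * x' * f t + f t * y' + w' * f t + z') (- (f t * x' + w')) (- (x' * f t + y')) x'"
proof -
  have x: "f x = x'" and z: "f z = z'"
    and yw: "\<And>s. f (s * y + w * s) = f s * y' + w' * f s"
    and wy: "\<And>s. f (y * s + s * w) = y' * f s + f s * w'"
    using c by (simp_all add: jordan_compatible_def)
  have "f (t * x * t + (t * y + w * t) + z) = f t * x' * f t + (f t * y' + w' * f t) + z'"
    using x z yw by (simp only: jordan_hom_add[OF f] jordan_hom_sandwich[OF f])
  moreover have "f (s * - (t * x + w) + - (x * t + y) * s)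
      = f s * - (f t * x' + w') + - (x' * f t + y') * f s" for s
  proof -
    have "s * - (t * x + w) + - (x * t + y) * s = - ((s * t * x + x * t * s) + (y * s + s * w))"
      by (simp add: algebra_simps)
    then have "f (s * - (t * x + w) + - (x * t + y) * s)
        = - (f (s * t * x + x * t * s) + f (y * s + s * w))"
      by (simp only: jordan_hom_uminus[OF f] jordan_hom_add[OF f])
    also have "\<dots> = - ((f s * f t * x' + x' * f t * f s) + (y' * f s + f s * w'))"
      using x wy by (simp only: jordan_hom_triple[OF f])
    finally show ?thesis by (simp add: algebra_simps)
  qed
  moreover have "f (- (t * x + w) * s + s * - (x * t + y))
      = - (f t * x' + w') * f s + f s * - (x' * f t + y')" for s
  proof -
    have "- (t * x + w) * s + s * - (x * t + y) = - ((t * x * s + s * x * t) + (s * y + w * s))"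
      by (simp add: algebra_simps)
    then have "f (- (t * x + w) * s + s * - (x * t + y))
        = - (f (t * x * s + s * x * t) + f (s * y + w * s))"
      by (simp only: jordan_hom_uminus[OF f] jordan_hom_add[OF f])
    also have "\<dots> = - ((f t * x' * f s + f s * x' * f t) + (f s * y' + w' * f s))"
      using x yw by (simp only: jordan_hom_triple[OF f])
    finally show ?thesis by (simp add: algebra_simps)
  qed
  ultimately show ?thesis
    using x by (simp add: jordan_compatible_def add.assoc)
qed

lemma jordan_hom_sandwich_entry:
  assumes f: "jordan_hom f" and "jordan_compatible f x y w z x' y' w' z'"
  shows "f (sandwich_entry T x y w z) = sandwich_entry (map f T) x' y' w' z'"
  using assms(2)
proof (induction T arbitrary: x y w z x' y' w' z' rule: rev_induct)
  case Nil
  then show ?case by (simp add: sandwich_entry_Nil jordan_compatible_def)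
next
  case (snoc t T)
  show ?case
    unfolding sandwich_entry_snoc map_append list.map
    by (rule snoc.IH[OF jordan_compatible_step[OF f snoc.prems]])
qed

lemma jordan_compatible_e11: "jordan_hom f \<Longrightarrow> jordan_compatible f 1 0 0 0 1 0 0 0"
  and jordan_compatible_e21: "jordan_hom f \<Longrightarrow> jordan_compatible f 0 0 1 0 0 0 1 0"
  by (simp_all add: jordan_compatible_def jordan_hom_zero jordan_hom_one)

definition inv_list :: "'a::ring_1 list \<Rightarrow> 'a list" where
  "inv_list T = concat (map (\<lambda>t. [0, - t, 0]) (rev T))"

lemma inv_list_Nil [simp]: "inv_list [] = []"
  and inv_list_Cons [simp]: "inv_list (t # T) = inv_list T @ [0, - t, 0]"
  by (simp_all add: inv_list_def)

lemma Emat1_inverse: "Emat1 t ** Emat [0, - t, 0] = mat 1" "Emat [0, - t, 0] ** Emat1 t = mat 1"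
  by (simp_all add: Emat1_eq_mat2 mat_1_eq_mat2)

lemma Emat_inv_list: "Emat T ** Emat (inv_list T) = mat 1" "Emat (inv_list T) ** Emat T = mat 1"
proof (induction T)
  case (Cons t T)
  have "Emat (t # T) ** Emat (inv_list (t # T))
      = Emat1 t ** (Emat T ** Emat (inv_list T)) ** Emat [0, - t, 0]"
    by (simp only: inv_list_Cons Emat_append Emat_Cons matrix_mul_assoc)
  then show "Emat (t # T) ** Emat (inv_list (t # T)) = mat 1"
    using Cons.IH(1) Emat1_inverse(1)[of t] by (simp add: matrix_mul_rid)
  have "Emat (inv_list (t # T)) ** Emat (t # T)
      = Emat (inv_list T) ** (Emat [0, - t, 0] ** Emat1 t) ** Emat T"
    by (simp only: inv_list_Cons Emat_append Emat_Cons matrix_mul_assoc)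
  then show "Emat (inv_list (t # T)) ** Emat (t # T) = mat 1"
    using Cons.IH(2) Emat1_inverse(2)[of t] by (simp add: matrix_mul_rid)
qed (simp_all add: matrix_mul_lid)

lemma map_inv_list: "jordan_hom f \<Longrightarrow> map f (inv_list T) = inv_list (map f T)"
  by (induction T) (simp_all add: jordan_hom_zero jordan_hom_uminus)

definition swap2 :: "'a::ring_1^2^2" where
  "swap2 = mat2 0 1 1 0"

lemma Emat_rev_swap: "Emat (rev T) ** swap2 ** Emat T ** swap2 = mat 1"
proof (induction T)
  case Nil
  show ?case by (simp add: swap2_def mat_1_eq_mat2)
next
  case (Cons t T)
  have "Emat (rev (t # T)) ** swap2 ** Emat (t # T) ** swap2
      = Emat (rev T) ** (Emat1 t ** swap2 ** Emat1 t) ** Emat T ** swap2"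
    by (simp add: Emat_append matrix_mul_rid matrix_mul_assoc)
  also have "Emat1 t ** swap2 ** Emat1 t = swap2"
    by (simp add: swap2_def Emat1_eq_mat2)
  finally show ?case using Cons.IH by simp
qed

lemma jordan_image_scalar_upper_right:
  assumes f: "jordan_hom f" and S: "Emat S = mat2 p 0 0 p"
  shows "Emat (map f S) $ 1 $ 2 = 0"
proof -
  let ?A = "Emat (map f S)" and ?B = "Emat (rev (map f S))"
  have "Emat (rev S) ** swap2 ** mat2 p 0 0 p ** swap2 = mat 1"
    using Emat_rev_swap[of S] S by simp
  then have "Emat (rev S) $ 1 $ 1 * p = 1"
    by (subst (asm) mat2_eta[of "Emat (rev S)"]) (simp add: swap2_def mat_1_eq_mat2)
  then have "sandwich_entry (rev S) 1 0 0 0 = 1"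
    using S by (simp add: sandwich_entry_def)
  then have left_inverse: "?B $ 1 $ 1 * ?A $ 1 $ 1 = 1"
    using jordan_hom_sandwich_entry[OF f jordan_compatible_e11[OF f], of "rev S"]
    by (simp add: sandwich_entry_def jordan_hom_one[OF f] rev_map)
  have "sandwich_entry S 0 0 1 0 = 0"
    using S by (simp add: sandwich_entry_def)
  then have "?A $ 1 $ 2 * ?B $ 1 $ 1 = 0"
    using jordan_hom_sandwich_entry[OF f jordan_compatible_e21[OF f], of S]
    by (simp add: sandwich_entry_def jordan_hom_zero[OF f])
  then have "?A $ 1 $ 2 * (?B $ 1 $ 1 * ?A $ 1 $ 1) = 0"
    by (simp add: mult.assoc[symmetric])
  then show ?thesis
    using left_inverse by simp
qed

lemma group_GL2: "group (GL2 x)"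
proof -
  have "monoid (M2 x)"
    by unfold_locales (simp_all add: M2_def matrix_mul_assoc matrix_mul_lid matrix_mul_rid)
  then show ?thesis
    unfolding GL2_def by (rule monoid.units_group)
qed

lemma GL2_carrier: "M \<in> carrier (GL2 x) \<longleftrightarrow> (\<exists>N. M ** N = mat 1 \<and> N ** M = mat 1)"
  by (auto simp: GL2_def units_of_def M2_def Units_def)

lemma GL2_mult [simp]: "a \<otimes>\<^bsub>GL2 x\<^esub> b = a ** b"
  and GL2_one [simp]: "\<one>\<^bsub>GL2 x\<^esub> = mat 1"
  by (simp_all add: GL2_def units_of_def M2_def)

lemma E2grp_mult [simp]: "a \<otimes>\<^bsub>E2grp S\<^esub> b = a ** b"
  and E2grp_one [simp]: "\<one>\<^bsub>E2grp S\<^esub> = mat 1"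
  and E2grp_carrier [simp]: "carrier (E2grp S) = E2 S"
  by (simp_all add: E2grp_def GL2_def units_of_def M2_def)

lemma Emat1_in_GL2: "Emat1 t \<in> carrier (GL2 x)"
  using Emat1_inverse[of t] by (auto simp: GL2_carrier)

lemma inv_GL2_Emat1: "inv\<^bsub>GL2 TYPE('a)\<^esub> (Emat1 t) = Emat [0, - t :: 'a::ring_1, 0]"
proof (rule group.inv_equality[OF group_GL2])
  show "Emat [0, - t, 0] \<in> carrier (GL2 TYPE('a))"
    using Emat1_inverse[of t] by (auto simp: GL2_carrier)
qed (use Emat1_inverse(2)[of t] Emat1_in_GL2 in simp_all)

lemma subgroup_E2: "subgroup (E2 S) (GL2 TYPE('a::ring_1))"
  unfolding E2_def using Emat1_in_GL2 by (intro group.generate_is_subgroup[OF group_GL2]) blast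

lemma group_E2grp: "group (E2grp S)"
  unfolding E2grp_def by (rule subgroup.subgroup_is_group[OF subgroup_E2 group_GL2])

lemma E2_eq_Emat_lists:
  assumes "0 \<in> S" and "\<And>s. s \<in> S \<Longrightarrow> - s \<in> S"
  shows "E2 S = Emat ` lists S"
proof
  show "E2 S \<subseteq> Emat ` lists S"
    unfolding E2_def
  proof
    fix g assume "g \<in> generate (GL2 TYPE('a)) (Emat1 ` S)"
    then show "g \<in> Emat ` lists S"
    proof (induction rule: generate.induct)
      case one
      show ?case by (rule image_eqI[of _ _ "[]"]) simp_all
    next
      case (incl h)
      then show ?case using image_eqI[of h Emat "[t]" for t] by (auto simp: matrix_mul_rid)
    next
      case (inv h)
      then obtain s where "s \<in> S" "h = Emat1 s" by blast
      then show ?case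
        using assms by (simp add: inv_GL2_Emat1 del: Emat_Cons)
    next
      case (eng h1 h2)
      then obtain T1 T2 where "T1 \<in> lists S" "T2 \<in> lists S" "h1 = Emat T1" "h2 = Emat T2"
        by blast
      then show ?case
        by (simp add: Emat_append[symmetric])
    qed
  qed
  show "Emat ` lists S \<subseteq> E2 S"
  proof (rule image_subsetI)
    fix T assume "T \<in> lists S"
    then show "Emat T \<in> E2 S"
      unfolding E2_def
    proof (induction T)
      case Nil
      show ?case using generate.one[of "GL2 TYPE('a)"] by simp
    next
      case (Cons t T)
      then have "Emat1 t \<in> generate (GL2 TYPE('a)) (Emat1 ` S)"
        by (auto intro: generate.incl)
      with Cons show ?case
        using generate.eng[of "Emat1 t" "GL2 TYPE('a)" _ "Emat T"] by simp
    qed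
  qed
qed

lemma subset_subring_gen: "S \<subseteq> subring_gen S"
  unfolding subring_gen_def by blast

lemma zero_in_subring_gen: "0 \<in> subring_gen S"
  unfolding subring_gen_def by blast

lemma uminus_in_subring_gen:
  assumes "x \<in> subring_gen S"
  shows "- x \<in> subring_gen S"
  unfolding subring_gen_def
proof
  fix A assume A: "A \<in> {A. S \<subseteq> A \<and> 1 \<in> A \<and> 0 \<in> A \<and>
      (\<forall>x\<in>A. \<forall>y\<in>A. x + y \<in> A \<and> x - y \<in> A \<and> x * y \<in> A)}"
  then have "x \<in> A"
    using assms unfolding subring_gen_def by blast
  with A have "0 - x \<in> A" by blast
  then show "- x \<in> A" by simp
qed

lemma subring_gen_commute:
  assumes "\<And>x. x \<in> S \<Longrightarrow> p * x = x * p" and "x \<in> subring_gen S"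
  shows "p * x = x * p"
proof -
  have "p * (x * y) = x * y * p" if "p * x = x * p" "p * y = y * p" for x y
    using that by (metis mult.assoc)
  then have "{x. p * x = x * p} \<in> {A. S \<subseteq> A \<and> 1 \<in> A \<and> 0 \<in> A \<and>
      (\<forall>x\<in>A. \<forall>y\<in>A. x + y \<in> A \<and> x - y \<in> A \<and> x * y \<in> A)}"
    using assms(1) by (auto simp: algebra_simps)
  with assms(2) show ?thesis
    unfolding subring_gen_def by blast
qed

lemma E2_subring_gen_eq: "E2 (subring_gen S) = Emat ` lists (subring_gen S)"
  by (rule E2_eq_Emat_lists) (simp_all add: zero_in_subring_gen uminus_in_subring_gen)

lemma Emat_map_in_E2: "Emat (map f T) \<in> E2 (subring_gen (range f))"
proof -
  have "map f T \<in> lists (range f)"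
    by auto
  then have "map f T \<in> lists (subring_gen (range f))"
    using lists_mono[OF subset_subring_gen] by blast
  then show ?thesis
    unfolding E2_subring_gen_eq by (rule imageI)
qed

subsection \<open>Central elements\<close>

lemma scalar_commute_Emat:
  assumes "\<And>r. r \<in> set U \<Longrightarrow> p * r = r * p"
  shows "mat2 p 0 0 p ** Emat U = Emat U ** mat2 p 0 0 p"
  using assms
proof (induction U)
  case (Cons t U)
  have "mat2 p 0 0 p ** Emat1 t = Emat1 t ** mat2 p 0 0 p"
    using Cons.prems by (simp add: Emat1_eq_mat2)
  then show ?case
    using Cons by (simp add: matrix_mul_assoc) (metis matrix_mul_assoc)
qed (simp add: matrix_mul_lid matrix_mul_rid)

lemma centre_E2_UNIV_scalar:
  assumes "Emat T \<in> centre (E2grp UNIV)"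
  shows "\<exists>a. Emat T = mat2 a 0 0 a \<and> (\<forall>s. a * s = s * a)"
proof -
  have commute: "Emat T ** Emat1 s = Emat1 s ** Emat T" for s
  proof -
    have "Emat1 s \<in> E2 UNIV"
      unfolding E2_def by (rule generate.incl) simp
    then show ?thesis using assms by (simp add: centre_def)
  qed
  obtain a b c d where T: "Emat T = mat2 a b c d" by (metis mat2_eta)
  have "- b = c" and "a = d"
    using arg_cong[OF commute[of 0], of "\<lambda>M. M $ 1 $ 1"] arg_cong[OF commute[of 0], of "\<lambda>M. M $ 1 $ 2"]
    by (simp_all add: T Emat1_eq_mat2)
  moreover have "a = b + d"
    using arg_cong[OF commute[of 1], of "\<lambda>M. M $ 1 $ 2"] by (simp add: T Emat1_eq_mat2)
  ultimately have "Emat T = mat2 a 0 0 a"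
    using T by simp
  moreover have "a * s = s * a" for s
    using commute[of s] unfolding \<open>Emat T = mat2 a 0 0 a\<close> Emat1_eq_mat2 by simp
  ultimately show ?thesis by blast
qed

text \<open>Conjugation by \<open>E(U)\<close> fixes the central scalar \<open>E(T)\<close>, so the upper right entry of
  every conjugate of \<open>E(T\<^sup>f)\<close> by \<open>E(U\<^sup>f)\<close> vanishes; \<open>U = []\<close>, \<open>[0]\<close> and \<open>[s]\<close> give
  \<open>q = 0\<close>, \<open>r = 0\<close> and \<open>u f(s) = f(s) p\<close>.\<close>

lemma jordan_image_central_scalar:
  assumes f: "jordan_hom f" and T: "Emat T = mat2 a 0 0 a" and central: "\<And>s. a * s = s * a"
  shows "\<exists>p. Emat (map f T) = mat2 p 0 0 p \<and> (\<forall>s. p * f s = f s * p)"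
proof -
  have conj_scalar: "Emat (U @ T @ inv_list U) = mat2 a 0 0 a" for U
  proof -
    have "Emat U ** mat2 a 0 0 a = mat2 a 0 0 a ** Emat U"
      using scalar_commute_Emat central by metis
    then have "Emat (U @ T @ inv_list U) = mat2 a 0 0 a ** (Emat U ** Emat (inv_list U))"
      by (simp add: Emat_append T matrix_mul_assoc)
    then show ?thesis
      by (simp add: Emat_inv_list matrix_mul_rid)
  qed
  have conj: "(Emat (map f U) ** Emat (map f T) ** Emat (inv_list (map f U))) $ 1 $ 2 = 0" for U
    using jordan_image_scalar_upper_right[OF f conj_scalar[of U]]
    by (simp add: Emat_append map_inv_list[OF f] matrix_mul_assoc)
  obtain p q r u where fT: "Emat (map f T) = mat2 p q r u" by (metis mat2_eta)
  have "q = 0"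
    using conj[of "[]"] by (simp add: fT)
  moreover have "r = 0"
    using conj[of "[0]"] by (simp add: fT Emat1_eq_mat2 jordan_hom_zero[OF f])
  ultimately have pu: "u * f s = f s * p" for s
    using conj[of "[s]"] by (simp add: fT Emat1_eq_mat2 jordan_hom_zero[OF f] jordan_hom_uminus[OF f])
  then have "u = p"
    using pu[of 1] by (simp add: jordan_hom_one[OF f])
  then show ?thesis
    using fT \<open>q = 0\<close> \<open>r = 0\<close> pu by auto
qed

lemma jordan_image_centre:
  assumes f: "jordan_hom f" and "Emat T \<in> centre (E2grp UNIV)"
  shows "Emat (map f T) \<in> centre (E2grp (subring_gen (range f)))"
proof -
  let ?R = "subring_gen (range f)"
  obtain a where aT: "Emat T = mat2 a 0 0 a" and ac: "\<forall>s. a * s = s * a"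
    using centre_E2_UNIV_scalar[OF assms(2)] by auto
  obtain p where fT: "Emat (map f T) = mat2 p 0 0 p" and pf: "\<forall>s. p * f s = f s * p"
    using jordan_image_central_scalar[OF f aT ac[rule_format]] by blast
  have commute: "p * x = x * p" if "x \<in> ?R" for x
    using subring_gen_commute[OF _ that] pf by blast
  have "mat2 p 0 0 p \<in> E2 ?R"
    unfolding fT[symmetric] by (rule Emat_map_in_E2)
  moreover have "mat2 p 0 0 p ** g = g ** mat2 p 0 0 p" if g: "g \<in> E2 ?R" for g
  proof -
    obtain U where U: "U \<in> lists ?R" "g = Emat U"
      using g unfolding E2_subring_gen_eq by blast
    then have "\<And>r. r \<in> set U \<Longrightarrow> p * r = r * p"
      using commute by blast
    then show ?thesis
      unfolding U(2) by (rule scalar_commute_Emat)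
  qed
  ultimately show ?thesis
    unfolding centre_def fT E2grp_carrier E2grp_mult by blast
qed

lemma mat_1_in_centre: "mat 1 \<in> centre (E2grp S)"
proof -
  have "mat 1 \<in> E2 S"
    unfolding E2_def using generate.one[of "GL2 TYPE('a)"] by simp
  then show ?thesis
    unfolding centre_def by (simp add: matrix_mul_lid matrix_mul_rid)
qed

subsection \<open>The homomorphism induced on \<open>E\<^sub>2\<close>\<close>

definition relator_image :: "('a::ring_1 \<Rightarrow> 'b::ring_1) \<Rightarrow> ('b^2^2) set" where
  "relator_image f = {Emat (map f T) | T. Emat T = mat 1}"

lemma relator_image_subset_centre:
  assumes "jordan_hom f"
  shows "relator_image f \<subseteq> centre (E2grp (subring_gen (range f)))"
  unfolding relator_image_def
  using jordan_image_centre[OF assms] mat_1_in_centre by force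

lemma inv_E2grp_Emat:
  assumes "Emat T \<in> E2 S" and "Emat (inv_list T) \<in> E2 S"
  shows "inv\<^bsub>E2grp S\<^esub> (Emat T) = Emat (inv_list T)"
  using assms Emat_inv_list(2)[of T] by (intro group.inv_equality[OF group_E2grp]) simp_all

lemma subgroup_relator_image:
  assumes f: "jordan_hom f"
  shows "subgroup (relator_image f) (E2grp (subring_gen (range f)))"
proof (rule group.subgroupI[OF group_E2grp])
  show "relator_image f \<subseteq> carrier (E2grp (subring_gen (range f)))"
    unfolding relator_image_def using Emat_map_in_E2 by auto
  show "relator_image f \<noteq> {}"
    unfolding relator_image_def using Emat_Nil by blast
next
  fix x assume "x \<in> relator_image f"
  then obtain T where x: "x = Emat (map f T)" and T: "Emat T = mat 1"
    unfolding relator_image_def by blast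
  have "Emat (inv_list T) = mat 1"
    using Emat_inv_list(1)[of T] T by (simp add: matrix_mul_lid)
  moreover have "inv\<^bsub>E2grp (subring_gen (range f))\<^esub> x = Emat (map f (inv_list T))"
    unfolding x map_inv_list[OF f]
    by (rule inv_E2grp_Emat) (metis Emat_map_in_E2 map_inv_list[OF f])+
  ultimately show "inv\<^bsub>E2grp (subring_gen (range f))\<^esub> x \<in> relator_image f"
    unfolding relator_image_def by blast
next
  fix x y assume "x \<in> relator_image f" "y \<in> relator_image f"
  then obtain T U where "x = Emat (map f T)" "Emat T = mat 1" "y = Emat (map f U)" "Emat U = mat 1"
    unfolding relator_image_def by blast
  then have "x \<otimes>\<^bsub>E2grp (subring_gen (range f))\<^esub> y = Emat (map f (T @ U)) \<and> Emat (T @ U) = mat 1"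
    by (simp add: Emat_append matrix_mul_lid)
  then show "x \<otimes>\<^bsub>E2grp (subring_gen (range f))\<^esub> y \<in> relator_image f"
    unfolding relator_image_def by blast
qed

lemma (in group) central_subgroup_normal:
  assumes "subgroup N G" and "N \<subseteq> centre G"
  shows "N \<lhd> G"
  unfolding normal_inv_iff
proof (intro conjI assms ballI)
  fix x h assume x: "x \<in> carrier G" and h: "h \<in> N"
  then have "h \<in> carrier G" and "x \<otimes> h = h \<otimes> x"
    using assms(2) unfolding centre_def by auto
  then have "x \<otimes> h \<otimes> inv x = h"
    using x by (simp add: m_assoc)
  with h show "x \<otimes> h \<otimes> inv x \<in> N" by simp
qed

lemma normal_relator_image:
  assumes "jordan_hom f"
  shows "relator_image f \<lhd> E2grp (subring_gen (range f))"
  using group.central_subgroup_normal[OF group_E2grp] subgroup_relator_image[OF assms]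
    relator_image_subset_centre[OF assms] by blast

lemma rcoset_relator_image_cong:
  assumes f: "jordan_hom f" and "Emat T = Emat U"
  shows "relator_image f #>\<^bsub>E2grp (subring_gen (range f))\<^esub> Emat (map f T)
       = relator_image f #>\<^bsub>E2grp (subring_gen (range f))\<^esub> Emat (map f U)"
proof -
  let ?G = "E2grp (subring_gen (range f))"
  have "Emat (T @ inv_list U) = mat 1"
    using assms(2) Emat_inv_list(1)[of U] by (simp add: Emat_append)
  then have "Emat (map f (T @ inv_list U)) \<in> relator_image f"
    unfolding relator_image_def by blast
  moreover have "Emat (map f (T @ inv_list U)) ** Emat (map f U) = Emat (map f T)"
    using Emat_inv_list(2)[of "map f U"]
    by (simp add: Emat_append map_inv_list[OF f] matrix_mul_assoc[symmetric] matrix_mul_rid)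
  ultimately have "Emat (map f T) \<in> relator_image f #>\<^bsub>?G\<^esub> Emat (map f U)"
    unfolding r_coset_def by force
  then show ?thesis
    using group.repr_independence[OF group_E2grp] subgroup_relator_image[OF f] Emat_map_in_E2
    by (metis E2grp_carrier)
qed

lemma ex_induced_hom_E2_Mod:
  fixes f :: "'a::ring_1 \<Rightarrow> 'b::ring_1"
  assumes f: "jordan_hom f"
  defines "G \<equiv> E2grp (subring_gen (range f))" and "N \<equiv> relator_image f"
  shows "\<exists>h. h \<in> hom (E2grp (UNIV :: 'a set)) (G Mod N) \<and> (\<forall>T. h (Emat T) = N #>\<^bsub>G\<^esub> Emat (map f T))"
proof -
  interpret normal N G
    unfolding G_def N_def by (rule normal_relator_image[OF f])
  define h where "h g = N #>\<^bsub>G\<^esub> Emat (map f (SOME T. g = Emat T))" for g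
  have h_Emat: "h (Emat T) = N #>\<^bsub>G\<^esub> Emat (map f T)" for T
    unfolding h_def G_def N_def
    by (rule rcoset_relator_image_cong[OF f, symmetric]) (rule someI[of _ T], rule refl)
  have carrier_UNIV: "carrier (E2grp (UNIV :: 'a set)) = range Emat"
    using E2_eq_Emat_lists[of UNIV] by simp
  have in_G: "Emat (map f T) \<in> carrier G" for T
    unfolding G_def using Emat_map_in_E2 by simp
  have "h \<in> hom (E2grp (UNIV :: 'a set)) (G Mod N)"
  proof (rule homI)
    fix g assume "g \<in> carrier (E2grp (UNIV :: 'a set))"
    then obtain T where "g = Emat T" using carrier_UNIV by blast
    then show "h g \<in> carrier (G Mod N)"
      unfolding FactGroup_def using h_Emat rcosetsI[OF subset in_G] by simp
  next
    fix g g' assume "g \<in> carrier (E2grp (UNIV :: 'a set))" "g' \<in> carrier (E2grp (UNIV :: 'a set))"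
    then obtain T U where "g = Emat T" "g' = Emat U" using carrier_UNIV by blast
    then show "h (g \<otimes>\<^bsub>E2grp UNIV\<^esub> g') = h g \<otimes>\<^bsub>G Mod N\<^esub> h g'"
      unfolding FactGroup_def using rcos_sum[OF in_G in_G]
      by (simp add: h_Emat Emat_append[symmetric] G_def)
  qed
  with h_Emat show ?thesis by blast
qed

theorem theorem3p6:
  fixes \<alpha> :: "'a::ring_1 \<Rightarrow> 'b::ring_1"
    and R'' :: "'b set" and H :: "('a^2^2) set" and H'' :: "('b^2^2) set"
    and N\<alpha> :: "('b^2^2) set"
  assumes jh: "jordan_hom \<alpha>"
    and R''_def: "R'' = subring_gen (range \<alpha>)"
    and H_def: "H = centre (E2grp (UNIV :: 'a set))"
    and H''_def: "H'' = centre (E2grp R'')"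
    and N_def: "N\<alpha> = {Emat (map \<alpha> T) | T. Emat T = mat 1}"
  shows "(\<forall>T. Emat T \<in> H \<longrightarrow> Emat (map \<alpha> T) \<in> H'')
       \<and> N\<alpha> \<subseteq> H''
       \<and> N\<alpha> \<lhd> E2grp R''
       \<and> (\<exists>\<alpha>E. \<alpha>E \<in> hom (E2grp (UNIV :: 'a set)) (E2grp R'' Mod N\<alpha>)
              \<and> (\<forall>T. \<alpha>E (Emat T) = N\<alpha> #>\<^bsub>E2grp R''\<^esub> Emat (map \<alpha> T)))"
proof -
  have N: "N\<alpha> = relator_image \<alpha>"
    unfolding N_def relator_image_def ..
  have "N\<alpha> \<subseteq> H''"
    unfolding N H''_def R''_def by (rule relator_image_subset_centre[OF jh])
  moreover have "N\<alpha> \<lhd> E2grp R''"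
    unfolding N R''_def by (rule normal_relator_image[OF jh])
  ultimately show ?thesis
    using jordan_image_centre[OF jh] ex_induced_hom_E2_Mod[OF jh]
    unfolding H_def H''_def R''_def N by blast
qed

end
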